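(* Let $g\in\mathscr T'$ and $f\in\mathscr T$. For $n\in\mathbb N$ let $\varepsilon_n(f)\in\mathcal F_{\rm fin}(\mathscr T)$ be the vector whose only nonzero component is the $n$-particle component $\frac{1}{\sqrt{n!}}f^{\otimes n}$. Then the series $\varepsilon(f)=\sum_{n\ge0}\varepsilon_n(f)$ converges absolutely in $\mathcal F_g$ (denote its sum $\varepsilon_g(f)$) and in $\mathcal F_0=\mathcal F(\mathfrak h)$ (sum $\varepsilon_0(f)$), and $$U_{g,0}\,\varepsilon_g(f)=e^{\langle g,f\rangle}\,\varepsilon_0(f),$$ where $U_{g,0}:\mathcal F_g\to\mathcal F_0$ is the continuous extension of $\Psi\mapsto e^{a(g)}\Psi$, $\Psi\in\mathcal F_{\rm fin}(\mathscr T)$.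
   Context: Let $\mathfrak h$ be a complex Hilbert space, $\mathscr T$ a topological vector space continuously embedded in $\mathfrak h$ with dense image, $\mathscr T'$ the space of continuous antilinear functionals on $\mathscr T$; write $\langle\varphi,f\rangle:=\overline{\varphi(f)}$ for $\varphi\in\mathscr T'$, $f\in\mathscr T$. $\mathcal F(\mathfrak h)$ is the symmetric Fock space; $\mathcal F_{\rm fin}(\mathscr T)$ the vectors with finitely many nonzero components, the $n$-th in the algebraic symmetric tensor product of $n$ copies of $\mathscr T$. For $g\in\mathscr T'$, $a(g)$ on $\mathcal F_{\rm fin}(\mathscr T)$ is defined linearly by $(a(g)\Psi)_n=\frac{\sqrt{n+1}}{(n+1)!}\sum_{\sigma\in S_{n+1}}\langle g,\psi_{\sigma(1)}\rangle\psi_{\sigma(2)}\otimes\cdots\otimes\psi_{\sigma(n+1)}$ for $\Psi_{n+1}=\psi_1\otimes_s\cdots\otimes_s\psi_{n+1}$; $e^{a(g)}=\sum_k a(g)^k/k!$ (finite sum). $\mathcal F_g$ is the completion of $\mathcal F_{\rm fin}(\mathscr T)$ in the inner product $\langle\Psi,\Phi\rangle_g:=\langle e^{a(g)}\Psi,e^{a(g)}\Phi\rangle_{\mathcal F(\mathfrak h)}$. *)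

theory Defs
  imports "HOL-Analysis.Analysis" "HOL-Combinatorics.Permutations"
begin

text \<open>Main/HOL-Analysis provide only real vector spaces, so complex vector spaces
  are introduced as a type class with a complex scalar multiplication.\<close>

class cvec = ab_group_add +
  fixes cscale :: "complex \<Rightarrow> 'a \<Rightarrow> 'a"  (infixr \<open>*\<^sub>C\<close> 75)
  assumes cscale_add_right: "a *\<^sub>C (x + y) = a *\<^sub>C x + a *\<^sub>C y"
    and cscale_add_left: "(a + b) *\<^sub>C x = a *\<^sub>C x + b *\<^sub>C x"
    and cscale_cscale: "a *\<^sub>C (b *\<^sub>C x) = (a * b) *\<^sub>C x"
    and cscale_one: "1 *\<^sub>C x = x"

definition hnorm :: "('h \<Rightarrow> 'h \<Rightarrow> complex) \<Rightarrow> 'h \<Rightarrow> real" where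
  "hnorm ip x = sqrt (Re (ip x x))"

definition is_hilbert :: "('h::cvec \<Rightarrow> 'h \<Rightarrow> complex) \<Rightarrow> bool" where
  "is_hilbert ip \<longleftrightarrow>
     (\<forall>x y z. ip x (y + z) = ip x y + ip x z) \<and>
     (\<forall>x y c. ip x (c *\<^sub>C y) = c * ip x y) \<and>
     (\<forall>x y. ip x y = cnj (ip y x)) \<and>
     (\<forall>x. Im (ip x x) = 0 \<and> Re (ip x x) \<ge> 0) \<and>
     (\<forall>x. ip x x = 0 \<longrightarrow> x = 0) \<and>
     (\<forall>X :: nat \<Rightarrow> 'h. (\<forall>e>0. \<exists>N. \<forall>m\<ge>N. \<forall>n\<ge>N. hnorm ip (X m - X n) < e) \<longrightarrow>
        (\<exists>L. (\<lambda>n. hnorm ip (X n - L)) \<longlonglongrightarrow> 0))"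

definition is_tvs :: "'t::{cvec, topological_space} itself \<Rightarrow> bool" where
  "is_tvs _ \<longleftrightarrow>
     continuous_on UNIV (\<lambda>p :: 't \<times> 't. fst p + snd p) \<and>
     continuous_on UNIV (\<lambda>p :: complex \<times> 't. fst p *\<^sub>C snd p)"

definition dense_cont_embedding ::
  "('h::cvec \<Rightarrow> 'h \<Rightarrow> complex) \<Rightarrow> ('t::{cvec, topological_space} \<Rightarrow> 'h) \<Rightarrow> bool" where
  "dense_cont_embedding ip \<iota> \<longleftrightarrow>
     (\<forall>s t. \<iota> (s + t) = \<iota> s + \<iota> t) \<and>
     (\<forall>c t. \<iota> (c *\<^sub>C t) = c *\<^sub>C \<iota> t) \<and>
     inj \<iota> \<and>
     (\<forall>t e. e > 0 \<longrightarrow> (\<exists>U. open U \<and> t \<in> U \<and> (\<forall>s\<in>U. hnorm ip (\<iota> s - \<iota> t) < e))) \<and>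
     (\<forall>x e. e > 0 \<longrightarrow> (\<exists>t. hnorm ip (x - \<iota> t) < e))"

definition cont_antilinear :: "('t::{cvec, topological_space} \<Rightarrow> complex) \<Rightarrow> bool" where
  "cont_antilinear g \<longleftrightarrow>
     (\<forall>s t. g (s + t) = g s + g t) \<and>
     (\<forall>c t. g (c *\<^sub>C t) = cnj c * g t) \<and>
     continuous_on UNIV g"

definition pair :: "('t \<Rightarrow> complex) \<Rightarrow> 't \<Rightarrow> complex" where
  "pair g f = cnj (g f)"

text \<open>A vector of F_fin(T) is represented by a finitely supported formal linear
  combination \<Psi> :: 't list \<Rightarrow> complex: the list [\<psi>1,...,\<psi>n] stands for the
  symmetric tensor \<psi>1 \<otimes>s ... \<otimes>s \<psi>n = (1/n!) \<Sum>\<sigma> \<psi>\<sigma>(1) \<otimes> ... \<otimes> \<psi>\<sigma>(n) in the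
  n-particle component.  All quantities below (inner products, norms) depend only
  on the vector represented, not on the representative.\<close>

type_synonym 't ffock = "'t list \<Rightarrow> complex"

definition fsupp :: "'t ffock \<Rightarrow> 't list set" where
  "fsupp \<Psi> = {xs. \<Psi> xs \<noteq> 0}"

text \<open>Inner product of F(h) between symmetric simple tensors of equal length n:
  \<langle>\<psi>1\<otimes>s..\<otimes>s\<psi>n, \<phi>1\<otimes>s..\<otimes>s\<phi>n\<rangle> = (1/n!) \<Sum>\<sigma> \<Prod>i \<langle>\<psi>i, \<phi>\<sigma>(i)\<rangle>.\<close>

definition sym_ip :: "('h \<Rightarrow> 'h \<Rightarrow> complex) \<Rightarrow> ('t \<Rightarrow> 'h) \<Rightarrow> 't list \<Rightarrow> 't list \<Rightarrow> complex" where
  "sym_ip ip \<iota> xs ys =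
     (if length xs = length ys then
        (1 / of_nat (fact (length xs))) *
        (\<Sum>\<sigma> | \<sigma> permutes {..<length xs}. \<Prod>i<length xs. ip (\<iota> (xs ! i)) (\<iota> (ys ! \<sigma> i)))
      else 0)"

definition fock_ip :: "('h \<Rightarrow> 'h \<Rightarrow> complex) \<Rightarrow> ('t \<Rightarrow> 'h) \<Rightarrow> 't ffock \<Rightarrow> 't ffock \<Rightarrow> complex" where
  "fock_ip ip \<iota> \<Psi> \<Phi> =
     (\<Sum>xs\<in>fsupp \<Psi>. \<Sum>ys\<in>fsupp \<Phi>. cnj (\<Psi> xs) * \<Phi> ys * sym_ip ip \<iota> xs ys)"

definition fock_norm :: "('h \<Rightarrow> 'h \<Rightarrow> complex) \<Rightarrow> ('t \<Rightarrow> 'h) \<Rightarrow> 't ffock \<Rightarrow> real" where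
  "fock_norm ip \<iota> \<Psi> = sqrt (Re (fock_ip ip \<iota> \<Psi> \<Psi>))"

text \<open>The annihilation operator a(g), defined on simple tensors by
  (a(g)\<Psi>)_n = sqrt(n+1)/(n+1)! \<Sum>\<sigma>\<in>S_(n+1) \<langle>g,\<psi>\<sigma>(1)\<rangle> \<psi>\<sigma>(2)\<otimes>...\<otimes>\<psi>\<sigma>(n+1)
  and extended linearly (indices shifted to start at 0).\<close>

definition annih :: "('t \<Rightarrow> complex) \<Rightarrow> 't ffock \<Rightarrow> 't ffock" where
  "annih g \<Psi> = (\<lambda>ys. \<Sum>xs\<in>fsupp \<Psi>.
     (if xs = [] then 0 else
       \<Psi> xs * (of_real (sqrt (real (length xs))) / of_nat (fact (length xs))) *
       (\<Sum>\<sigma> | \<sigma> permutes {..<length xs}.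
          (if map (\<lambda>i. xs ! \<sigma> i) [1..<length xs] = ys then pair g (xs ! \<sigma> 0) else 0))))"

text \<open>e^{a(g)} = \<Sum>k a(g)^k / k!, a finite sum on F_fin(T) (a(g)^k \<Psi> = 0 for k
  larger than the maximal particle number of \<Psi>).\<close>

definition fdeg :: "'t ffock \<Rightarrow> nat" where
  "fdeg \<Psi> = Max (insert 0 (length ` fsupp \<Psi>))"

definition exp_annih :: "('t \<Rightarrow> complex) \<Rightarrow> 't ffock \<Rightarrow> 't ffock" where
  "exp_annih g \<Psi> = (\<lambda>ys. \<Sum>k\<le>fdeg \<Psi>. ((annih g ^^ k) \<Psi> ys) / of_nat (fact k))"

definition fock_norm_g ::
  "('h \<Rightarrow> 'h \<Rightarrow> complex) \<Rightarrow> ('t \<Rightarrow> 'h) \<Rightarrow> ('t \<Rightarrow> complex) \<Rightarrow> 't ffock \<Rightarrow> real" where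
  "fock_norm_g ip \<iota> g \<Psi> = fock_norm ip \<iota> (exp_annih g \<Psi>)"

definition eps_n :: "nat \<Rightarrow> 't \<Rightarrow> 't ffock" where
  "eps_n n f = (\<lambda>ys. if ys = replicate n f then 1 / of_real (sqrt (real (fact n))) else 0)"

definition eps_partial :: "nat \<Rightarrow> 't \<Rightarrow> 't ffock" where
  "eps_partial N f = (\<lambda>ys. \<Sum>n<N. eps_n n f ys)"

end

theory Submission
  imports Defs
begin

text \<open>Everything happens on the ray of \<open>f\<close>. Put \<open>c = \<langle>g,f\<rangle>\<close> and \<open>R = \<parallel>f\<parallel>\<^sup>2\<close>.
  The vectors \<open>\<epsilon>\<^sub>m(f)\<close> are orthogonal with squared norm \<open>R\<^sup>m / m!\<close>, and \<open>a(g)\<close> maps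
  \<open>\<epsilon>\<^sub>m(f)\<close> to \<open>c\<close> times \<open>\<epsilon>\<^sub>m\<^sub>-\<^sub>1(f)\<close> (its factor \<open>\<surd>m\<close> cancels against \<open>1/\<surd>m!\<close>), so \<open>e\<^bsup>a(g)\<^esup>\<close>
  acts on the coefficients of \<open>\<Sum> \<alpha>\<^sub>m \<epsilon>\<^sub>m(f)\<close> by convolution with the exponential series
  of \<open>c\<close>. Every squared norm that occurs is therefore a sum \<open>\<Sum>\<^sub>m\<^sub>\<le>\<^sub>n w\<^sub>m R\<^sup>m/m!\<close> whose
  weights are bounded by \<open>E A\<^bsup>n-m\<^esup>/(n-m)!\<close> with \<open>A = |c|\<^sup>2\<close>, hence by the binomial theorem
  it is at most \<open>E (A + R)\<^sup>n/n!\<close>. The square roots of such bounds are summable, which gives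
  absolute convergence in both norms. For the partial sums the weights are squared
  remainders of the exponential series of \<open>c\<close>, with \<open>E = e\<^bsup>2|c|\<^esup>\<close>, and the bound
  \<open>E (A + R)\<^sup>N/N!\<close> tends to \<open>0\<close>.\<close>

lemma power_div_fact_convolution:
  fixes A B :: real
  shows "(\<Sum>m\<le>n. A ^ (n - m) / fact (n - m) * (B ^ m / fact m)) = (A + B) ^ n / fact n"
  using exp_series_add_commuting[of B A n]
  by (simp add: add.commute mult.commute divide_inverse)

lemma summable_power_div_fact: "summable (\<lambda>n. (x::real) ^ n / fact n)"
  using summable_exp[of x] by (simp add: divide_inverse mult.commute)

lemma fact_mult_fact_le: "fact i * fact j \<le> (fact (i + j) :: real)"
  by (metis fact_fact_dvd_fact dvd_imp_le fact_gt_zero of_nat_fact of_nat_le_iff of_nat_mult)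

lemma norm_exp_minus_partial_sum_le:
  fixes c :: complex
  shows "cmod (exp c - (\<Sum>k<j. c ^ k / fact k)) \<le> cmod c ^ j / fact j * exp (cmod c)"
proof -
  have tail: "(\<lambda>i. c ^ (i + j) / fact (i + j)) sums (exp c - (\<Sum>k<j. c ^ k / fact k))"
    using sums_split_initial_segment[OF exp_converges[of c], of j]
    by (simp add: scaleR_conv_of_real divide_inverse mult.commute)
  have term_le: "norm (c ^ (i + j) / fact (i + j)) \<le> cmod c ^ j / fact j * (cmod c ^ i / fact i)" for i
  proof -
    have "cmod c ^ (i + j) / fact (i + j) \<le> cmod c ^ (i + j) / (fact i * fact j)"
      using fact_mult_fact_le by (intro divide_left_mono) auto
    then show ?thesis by (simp add: norm_divide norm_mult norm_power power_add field_simps)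
  qed
  have dominant: "(\<lambda>i. cmod c ^ j / fact j * (cmod c ^ i / fact i)) sums (cmod c ^ j / fact j * exp (cmod c))"
    using sums_mult[OF exp_converges[of "cmod c"], of "cmod c ^ j / fact j"]
    by (simp add: divide_inverse ac_simps)
  show ?thesis
    using norm_sums_le[OF tail dominant term_le] .
qed

lemma square_power_div_fact_le:
  fixes x :: real
  shows "(x ^ j / fact j)\<^sup>2 \<le> (x\<^sup>2) ^ j / fact j"
proof -
  have "(x ^ j / fact j)\<^sup>2 = (x\<^sup>2) ^ j / fact j / fact j"
    by (simp add: power2_eq_square power_mult_distrib)
  also have "\<dots> \<le> (x\<^sup>2) ^ j / fact j"
    by (simp add: divide_le_eq mult_le_cancel_left1)
  finally show ?thesis .
qed

lemma sum_le_power_div_fact_convolution: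
  fixes w :: "nat \<Rightarrow> real"
  assumes "M \<subseteq> {..n}" "0 \<le> R"
    and "\<And>m. m \<le> n \<Longrightarrow> 0 \<le> w m \<and> w m \<le> E * (A ^ (n - m) / fact (n - m))"
  shows "(\<Sum>m\<in>M. w m * (R ^ m / fact m)) \<le> E * ((A + R) ^ n / fact n)"
proof -
  have "(\<Sum>m\<in>M. w m * (R ^ m / fact m)) \<le> (\<Sum>m\<le>n. w m * (R ^ m / fact m))"
    using assms by (intro sum_mono2) auto
  also have "\<dots> \<le> (\<Sum>m\<le>n. E * (A ^ (n - m) / fact (n - m)) * (R ^ m / fact m))"
    using assms by (intro sum_mono mult_right_mono) auto
  also have "\<dots> = E * ((A + R) ^ n / fact n)"
    by (simp only: mult.assoc power_div_fact_convolution flip: sum_distrib_left)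
  finally show ?thesis .
qed

lemma summable_sqrt_of_le_power_div_fact:
  fixes a :: "nat \<Rightarrow> real"
  assumes "\<And>n. 0 \<le> a n" "\<And>n. a n \<le> B ^ n / fact n"
  shows "summable (\<lambda>n. sqrt (a n))"
proof (rule summable_comparison_test')
  show "summable (\<lambda>n. ((4 * B) ^ n / fact n + (1/4) ^ n) / 2)"
    by (intro summable_divide summable_add summable_power_div_fact summable_geometric) simp
  fix n
  \<comment> \<open>AM-GM for the factorisation \<open>a n = (4 ^ n * a n) * (1/4) ^ n\<close>\<close>
  have "sqrt (a n) = sqrt ((4 ^ n * a n) * (1/4) ^ n)"
    by (simp add: power_one_over)
  also have "\<dots> \<le> (4 ^ n * a n + (1/4) ^ n) / 2"
    using assms by (intro arith_geo_mean_sqrt) auto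
  also have "\<dots> \<le> ((4 * B) ^ n / fact n + (1/4) ^ n) / 2"
    using mult_left_mono[OF assms(2)[of n], of "4 ^ n"] by (simp add: power_mult_distrib field_simps)
  finally show "norm (sqrt (a n)) \<le> ((4 * B) ^ n / fact n + (1/4) ^ n) / 2"
    using assms by simp
qed

lemma sum_lessThan_if_add_less:
  "(\<Sum>k<(N::nat). if m + k < N then h k else 0) = (\<Sum>k<N - m. h k)"
  by (rule sum.mono_neutral_cong_right) (auto simp: less_diff_conv add.commute)

text \<open>\<open>eps_comb f \<alpha> N\<close> is the vector \<open>\<Sum>\<^sub>m\<^sub><\<^sub>N \<alpha> m \<epsilon>\<^sub>m(f)\<close>, in the representative
  that puts the whole \<open>m\<close>-particle coefficient on the list \<open>replicate m f\<close>.\<close>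

definition eps_comb :: "'t \<Rightarrow> (nat \<Rightarrow> complex) \<Rightarrow> nat \<Rightarrow> 't ffock" where
  "eps_comb f \<alpha> N ys = (if ys = replicate (length ys) f \<and> length ys < N
      then \<alpha> (length ys) / of_real (sqrt (real (fact (length ys)))) else 0)"

lemma eps_comb_cong: "(\<And>m. m < N \<Longrightarrow> \<alpha> m = \<beta> m) \<Longrightarrow> eps_comb f \<alpha> N = eps_comb f \<beta> N"
  by (auto simp: eps_comb_def fun_eq_iff)

lemma eps_comb_replicate:
  "m < N \<Longrightarrow> eps_comb f \<alpha> N (replicate m f) = \<alpha> m / of_real (sqrt (real (fact m)))"
  by (simp add: eps_comb_def)

lemma eps_comb_nonzero_imp_replicate: "eps_comb f \<alpha> N ys \<noteq> 0 \<Longrightarrow> ys \<in> (\<lambda>m. replicate m f) ` {..<N}"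
  by (auto simp: eps_comb_def split: if_splits intro!: image_eqI[of _ _ "length ys"])

lemma inj_on_replicate: "inj_on (\<lambda>m. replicate m x) A"
  by (rule inj_onI) (metis length_replicate)

lemma sum_fsupp_superset:
  assumes "finite S" "\<And>x. \<Psi> x \<noteq> 0 \<Longrightarrow> x \<in> S" "\<And>x. \<Psi> x = 0 \<Longrightarrow> F x = 0"
  shows "sum F (fsupp \<Psi>) = sum F S"
  by (rule sum.mono_neutral_left) (use assms in \<open>auto simp: fsupp_def\<close>)

lemma fock_ip_superset:
  assumes "finite S" "finite T" "\<And>x. \<Psi> x \<noteq> 0 \<Longrightarrow> x \<in> S" "\<And>y. \<Phi> y \<noteq> 0 \<Longrightarrow> y \<in> T"
  shows "fock_ip ip \<iota> \<Psi> \<Phi> = (\<Sum>xs\<in>S. \<Sum>ys\<in>T. cnj (\<Psi> xs) * \<Phi> ys * sym_ip ip \<iota> xs ys)"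
  unfolding fock_ip_def using assms
  by (simp add: sum_fsupp_superset[of S \<Psi>] sum_fsupp_superset[of T \<Phi>])

lemma sym_ip_replicate:
  "sym_ip ip \<iota> (replicate m x) (replicate m' x) = (if m = m' then ip (\<iota> x) (\<iota> x) ^ m else 0)"
proof (cases "m = m'")
  case True
  have "(\<Prod>i<m. ip (\<iota> (replicate m x ! i)) (\<iota> (replicate m x ! \<sigma> i))) = ip (\<iota> x) (\<iota> x) ^ m"
    if "\<sigma> permutes {..<m}" for \<sigma>
    using permutes_in_image[OF that] by simp
  then show ?thesis
    using True card_permutations[of "{..<m}" m] by (simp add: sym_ip_def)
qed (simp add: sym_ip_def)

lemma fock_norm_eps_comb:
  assumes "Im (ip (\<iota> f) (\<iota> f)) = 0"
  shows "fock_norm ip \<iota> (eps_comb f \<alpha> N) =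
     sqrt (\<Sum>m<N. (cmod (\<alpha> m))\<^sup>2 * (Re (ip (\<iota> f) (\<iota> f)) ^ m / fact m))"
proof -
  define R where "R = Re (ip (\<iota> f) (\<iota> f))"
  have ip_real: "ip (\<iota> f) (\<iota> f) = of_real R"
    using assms by (simp add: R_def complex_eq_iff)
  have sqrt_fact: "of_real (sqrt (fact m)) * of_real (sqrt (fact m)) = (fact m :: complex)" for m
    by (simp flip: of_real_mult)
  have "fock_ip ip \<iota> (eps_comb f \<alpha> N) (eps_comb f \<alpha> N) =
      (\<Sum>m<N. \<Sum>m'<N. cnj (eps_comb f \<alpha> N (replicate m f)) * eps_comb f \<alpha> N (replicate m' f)
        * sym_ip ip \<iota> (replicate m f) (replicate m' f))"
    by (simp add: fock_ip_superset[OF _ _ eps_comb_nonzero_imp_replicate eps_comb_nonzero_imp_replicate]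
        sum.reindex inj_on_replicate)
  also have "\<dots> = (\<Sum>m<N. of_real ((cmod (\<alpha> m))\<^sup>2 * (R ^ m / fact m)))"
  proof -
    have "cnj (\<alpha> m) * \<alpha> m = of_real ((cmod (\<alpha> m))\<^sup>2)" for m
      by (simp only: complex_norm_square mult.commute)
    then show ?thesis
      by (simp add: sym_ip_replicate eps_comb_replicate ip_real if_distrib cong: if_cong)
         (simp add: sqrt_fact field_simps)
  qed
  finally have "fock_ip ip \<iota> (eps_comb f \<alpha> N) (eps_comb f \<alpha> N) =
      of_real (\<Sum>m<N. (cmod (\<alpha> m))\<^sup>2 * (R ^ m / fact m))"
    by (simp only: of_real_sum)
  then show ?thesis
    by (simp only: fock_norm_def R_def Re_complex_of_real)
qed

lemma sum_permutes_annih_replicate: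
  assumes "0 < m"
  shows "(\<Sum>\<sigma> | \<sigma> permutes {..<m}.
            if map (\<lambda>i. replicate m x ! \<sigma> i) [1..<m] = ys then pair g (replicate m x ! \<sigma> 0) else 0)
       = fact m * (if replicate (m - 1) x = ys then pair g x else 0)"
proof -
  have "map (\<lambda>i. replicate m x ! \<sigma> i) [1..<m] = replicate (m - 1) x" "replicate m x ! \<sigma> 0 = x"
    if "\<sigma> permutes {..<m}" for \<sigma>
    using permutes_in_image[OF that] assms by (simp_all add: list_eq_iff_nth_eq)
  then show ?thesis
    using card_permutations[of "{..<m}" m] by simp
qed

lemma sqrt_fact_reduce: "0 < m \<Longrightarrow> sqrt (fact m) = sqrt (real m) * sqrt (fact (m - 1))"
  by (simp add: fact_reduce real_sqrt_mult)

lemma annih_eps_comb_apply: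
  "annih g (eps_comb f \<alpha> N) ys = (\<Sum>m<N. if m = 0 then 0 else
      \<alpha> m / of_real (sqrt (fact (m - 1))) * (if replicate (m - 1) f = ys then pair g f else 0))"
  (is "_ = ?rhs")
proof -
  have "annih g (eps_comb f \<alpha> N) ys = (\<Sum>m<N. if m = 0 then 0 else
      eps_comb f \<alpha> N (replicate m f) * (of_real (sqrt (real m)) / fact m) *
      (fact m * (if replicate (m - 1) f = ys then pair g f else 0)))"
    unfolding annih_def
    by (simp add: sum_fsupp_superset[OF _ eps_comb_nonzero_imp_replicate] sum.reindex inj_on_replicate
        sum_permutes_annih_replicate del: One_nat_def cong: if_cong)
  also have "\<dots> = ?rhs"
    by (intro sum.cong refl) (auto simp: eps_comb_replicate sqrt_fact_reduce field_simps)
  finally show ?thesis .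
qed

lemma annih_eps_comb:
  "annih g (eps_comb f \<alpha> N) = eps_comb f (\<lambda>m. if m + 1 < N then pair g f * \<alpha> (m + 1) else 0) N"
proof
  fix ys
  show "annih g (eps_comb f \<alpha> N) ys = eps_comb f (\<lambda>m. if m + 1 < N then pair g f * \<alpha> (m + 1) else 0) N ys"
  proof (cases "ys = replicate (length ys) f")
    case True
    then have "m \<noteq> 0 \<Longrightarrow> replicate (m - 1) f = ys \<longleftrightarrow> m = Suc (length ys)" for m
      by (subst True) (auto simp: replicate_eq_replicate)
    then show ?thesis
      using True by (simp add: annih_eps_comb_apply eps_comb_def if_distrib mult.commute cong: if_cong)
  next
    case False
    then have "replicate k f \<noteq> ys" for k
      by auto
    then have "annih g (eps_comb f \<alpha> N) ys = 0"
      unfolding annih_eps_comb_apply by (intro sum.neutral) auto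
    moreover from False have "eps_comb f \<beta> N ys = 0" for \<beta>
      by (simp add: eps_comb_def)
    ultimately show ?thesis
      by simp
  qed
qed

lemma annih_pow_eps_comb:
  "(annih g ^^ k) (eps_comb f \<alpha> N) =
     eps_comb f (\<lambda>m. if m + k < N then pair g f ^ k * \<alpha> (m + k) else 0) N"
proof (induction k)
  case 0
  show ?case by (auto intro: eps_comb_cong)
next
  case (Suc k)
  show ?case
    by (simp add: Suc annih_eps_comb, rule eps_comb_cong) (auto simp: algebra_simps)
qed

lemma fdeg_eps_comb_ge:
  assumes "m < N" "\<alpha> m \<noteq> 0"
  shows "m \<le> fdeg (eps_comb f \<alpha> N)"
proof -
  have "finite (fsupp (eps_comb f \<alpha> N))"
    by (rule finite_subset[of _ "(\<lambda>m. replicate m f) ` {..<N}"]) (auto simp: fsupp_def eps_comb_nonzero_imp_replicate)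
  moreover have "replicate m f \<in> fsupp (eps_comb f \<alpha> N)"
    using assms by (simp add: fsupp_def eps_comb_replicate)
  ultimately have "length (replicate m f) \<le> Max (insert 0 (length ` fsupp (eps_comb f \<alpha> N)))"
    by (intro Max_ge) (auto simp del: length_replicate)
  then show ?thesis
    by (simp add: fdeg_def)
qed

lemma exp_annih_eps_comb:
  assumes "\<alpha> (N - 1) \<noteq> 0"
  shows "exp_annih g (eps_comb f \<alpha> N) =
     eps_comb f (\<lambda>m. \<Sum>k<N. if m + k < N then pair g f ^ k * \<alpha> (m + k) / fact k else 0) N"
proof
  fix ys
  show "exp_annih g (eps_comb f \<alpha> N) ys =
     eps_comb f (\<lambda>m. \<Sum>k<N. if m + k < N then pair g f ^ k * \<alpha> (m + k) / fact k else 0) N ys"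
  proof (cases "ys = replicate (length ys) f \<and> length ys < N")
    case True
    define F where "F k = (annih g ^^ k) (eps_comb f \<alpha> N) ys / of_nat (fact k)" for k
    have "N - 1 \<le> fdeg (eps_comb f \<alpha> N)"
      using True assms by (intro fdeg_eps_comb_ge) auto
    then have "exp_annih g (eps_comb f \<alpha> N) ys = (\<Sum>k<N. F k)"
      unfolding exp_annih_def F_def[symmetric]
      by (intro sum.mono_neutral_right) (auto simp: F_def annih_pow_eps_comb eps_comb_def)
    also have "\<dots> = eps_comb f
        (\<lambda>m. \<Sum>k<N. if m + k < N then pair g f ^ k * \<alpha> (m + k) / fact k else 0) N ys"
      using True by (simp add: F_def annih_pow_eps_comb eps_comb_def sum_divide_distrib) (auto intro!: sum.cong)
    finally show ?thesis .
  next
    case False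
    then have "eps_comb f \<beta> N ys = 0" for \<beta>
      by (simp only: eps_comb_def if_not_P if_False)
    then show ?thesis
      by (simp add: exp_annih_def annih_pow_eps_comb)
  qed
qed

lemma eps_n_eq_eps_comb: "eps_n n f = eps_comb f (\<lambda>m. if m = n then 1 else 0) (Suc n)"
  by (auto simp: eps_n_def eps_comb_def fun_eq_iff)

lemma eps_partial_eq_eps_comb: "eps_partial N f = eps_comb f (\<lambda>_. 1) N"
proof
  fix ys
  show "eps_partial N f ys = eps_comb f (\<lambda>_. 1) N ys"
  proof (cases "ys = replicate (length ys) f")
    case True
    then have "eps_n n f ys = (if n = length ys then 1 / of_real (sqrt (fact (length ys))) else 0)" for n
      by (auto simp: eps_n_def)
    then show ?thesis
      using True by (simp add: eps_partial_def eps_comb_def)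
  next
    case False
    then have "eps_n n f ys = 0" for n
      by (auto simp: eps_n_def)
    then show ?thesis
      using False by (simp add: eps_partial_def eps_comb_def)
  qed
qed

lemma eps_comb_diff:
  "(\<lambda>ys. eps_comb f \<alpha> N ys - z * eps_comb f \<beta> N ys) = eps_comb f (\<lambda>m. \<alpha> m - z * \<beta> m) N"
  by (auto simp: eps_comb_def fun_eq_iff diff_divide_distrib)

lemma exp_annih_eps_n:
  "exp_annih g (eps_n n f) =
     eps_comb f (\<lambda>m. if m \<le> n then pair g f ^ (n - m) / fact (n - m) else 0) (Suc n)"
  unfolding eps_n_eq_eps_comb
proof (subst exp_annih_eps_comb, simp, rule eps_comb_cong)
  fix m assume "m < Suc n"
  moreover have "(\<Sum>k<Suc n - m. pair g f ^ k * (if m + k = n then 1 else 0) / fact k)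
      = (\<Sum>k<Suc n - m. if k = n - m then pair g f ^ k / fact k else 0)"
    by (intro sum.cong) auto
  ultimately show "(\<Sum>k<Suc n. if m + k < Suc n then pair g f ^ k * (if m + k = n then 1 else 0) / fact k else 0)
      = (if m \<le> n then pair g f ^ (n - m) / fact (n - m) else 0)"
    by (simp add: sum_lessThan_if_add_less)
qed

lemma exp_annih_eps_partial_minus:
  "(\<lambda>ys. exp_annih g (eps_partial N f) ys - exp (pair g f) * eps_partial N f ys) =
     eps_comb f (\<lambda>m. (\<Sum>k<N - m. pair g f ^ k / fact k) - exp (pair g f)) N"
  unfolding eps_partial_eq_eps_comb exp_annih_eps_comb[of "\<lambda>_. 1", OF one_neq_zero] eps_comb_diff
  by (rule eps_comb_cong) (simp add: sum_lessThan_if_add_less)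

lemma summable_fock_norm_eps_n:
  assumes "Im (ip (\<iota> f) (\<iota> f)) = 0" "0 \<le> Re (ip (\<iota> f) (\<iota> f))"
  shows "summable (\<lambda>n. fock_norm ip \<iota> (eps_n n f))"
proof -
  define R where "R = Re (ip (\<iota> f) (\<iota> f))"
  have "fock_norm ip \<iota> (eps_n n f) = sqrt (R ^ n / fact n)" for n
  proof -
    have "(\<Sum>m<Suc n. (cmod (if m = n then 1 else 0))\<^sup>2 * (R ^ m / fact m)) = R ^ n / fact n"
      by (simp add: if_distrib cong: if_cong)
    then show ?thesis
      unfolding eps_n_eq_eps_comb fock_norm_eps_comb[of ip \<iota> f, OF assms(1)] R_def by simp
  qed
  moreover have "0 \<le> R" using assms(2) by (simp add: R_def)
  ultimately show ?thesis
    using summable_sqrt_of_le_power_div_fact[of "\<lambda>n. R ^ n / fact n" R] by simp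
qed

lemma summable_fock_norm_g_eps_n:
  assumes "Im (ip (\<iota> f) (\<iota> f)) = 0" "0 \<le> Re (ip (\<iota> f) (\<iota> f))"
  shows "summable (\<lambda>n. fock_norm_g ip \<iota> g (eps_n n f))"
proof -
  define R where "R = Re (ip (\<iota> f) (\<iota> f))"
  define c where "c = pair g f"
  define w where "w n m = (cmod (if m \<le> n then c ^ (n - m) / fact (n - m) else 0))\<^sup>2" for n m
  define a where "a n = (\<Sum>m<Suc n. w n m * (R ^ m / fact m))" for n
  have "fock_norm_g ip \<iota> g (eps_n n f) = sqrt (a n)" for n
    using assms(1) by (simp add: fock_norm_g_def exp_annih_eps_n fock_norm_eps_comb a_def w_def R_def c_def)
  moreover have "0 \<le> a n" for n
    using assms(2) unfolding a_def R_def by (intro sum_nonneg mult_nonneg_nonneg) (simp_all add: w_def)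
  moreover have "a n \<le> ((cmod c)\<^sup>2 + R) ^ n / fact n" for n
  proof -
    have "w n m \<le> 1 * ((cmod c)\<^sup>2 ^ (n - m) / fact (n - m))" if "m \<le> n" for m
      using that square_power_div_fact_le[of "cmod c" "n - m"]
      by (simp add: w_def norm_divide norm_power)
    then have "a n \<le> 1 * (((cmod c)\<^sup>2 + R) ^ n / fact n)"
      unfolding a_def using assms(2)
      by (intro sum_le_power_div_fact_convolution) (auto simp: R_def w_def)
    then show ?thesis
      by simp
  qed
  ultimately show ?thesis
    using summable_sqrt_of_le_power_div_fact[of a "(cmod c)\<^sup>2 + R"] by simp
qed

lemma fock_norm_exp_annih_eps_partial_minus_tendsto:
  assumes "Im (ip (\<iota> f) (\<iota> f)) = 0" "0 \<le> Re (ip (\<iota> f) (\<iota> f))"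
  shows "(\<lambda>N. fock_norm ip \<iota>
            (\<lambda>ys. exp_annih g (eps_partial N f) ys - exp (pair g f) * eps_partial N f ys)) \<longlonglongrightarrow> 0"
proof -
  define R where "R = Re (ip (\<iota> f) (\<iota> f))"
  define c where "c = pair g f"
  define E where "E = (exp (cmod c))\<^sup>2"
  define w where "w N m = (cmod ((\<Sum>k<N - m. c ^ k / fact k) - exp c))\<^sup>2" for N m
  define a where "a N = (\<Sum>m<N. w N m * (R ^ m / fact m))" for N
  have norm_eq: "fock_norm ip \<iota> (\<lambda>ys. exp_annih g (eps_partial N f) ys - exp (pair g f) * eps_partial N f ys)
      = sqrt (a N)" for N
    using assms(1) by (simp add: exp_annih_eps_partial_minus fock_norm_eps_comb a_def w_def R_def c_def)
  have "w N m \<le> E * ((cmod c)\<^sup>2 ^ (N - m) / fact (N - m))" for N m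
  proof -
    have "cmod ((\<Sum>k<N - m. c ^ k / fact k) - exp c) \<le> cmod c ^ (N - m) / fact (N - m) * exp (cmod c)"
      using norm_exp_minus_partial_sum_le[of c "N - m"] by (simp add: norm_minus_commute)
    then have "w N m \<le> (cmod c ^ (N - m) / fact (N - m) * exp (cmod c))\<^sup>2"
      unfolding w_def by (intro power_mono) simp_all
    also have "\<dots> = (cmod c ^ (N - m) / fact (N - m))\<^sup>2 * E"
      by (simp only: E_def power_mult_distrib)
    also have "\<dots> \<le> (cmod c)\<^sup>2 ^ (N - m) / fact (N - m) * E"
      by (intro mult_right_mono square_power_div_fact_le) (simp add: E_def)
    finally show ?thesis by (simp add: mult.commute)
  qed
  moreover have "0 \<le> w N m" for N m
    by (simp add: w_def)
  ultimately have upper: "a N \<le> E * (((cmod c)\<^sup>2 + R) ^ N / fact N)" for N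
    unfolding a_def using assms(2) by (intro sum_le_power_div_fact_convolution) (auto simp: R_def)
  have lower: "0 \<le> a N" for N
    using assms(2) unfolding a_def R_def by (intro sum_nonneg mult_nonneg_nonneg) (simp_all add: w_def)
  have bound_tendsto: "(\<lambda>N. E * (((cmod c)\<^sup>2 + R) ^ N / fact N)) \<longlonglongrightarrow> 0"
    using tendsto_mult_left[OF summable_LIMSEQ_zero[OF summable_power_div_fact], of E] by simp
  have "a \<longlonglongrightarrow> 0"
    by (rule tendsto_sandwich[OF _ _ tendsto_const bound_tendsto]) (use lower upper in auto)
  then show ?thesis
    unfolding norm_eq using tendsto_real_sqrt[of a 0] by simp
qed

theorem lemma2p15:
  fixes ip :: "'h::cvec \<Rightarrow> 'h \<Rightarrow> complex"
    and \<iota> :: "'t::{cvec, topological_space} \<Rightarrow> 'h"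
    and g :: "'t \<Rightarrow> complex"
    and f :: 't
  assumes "is_hilbert ip"
    and "is_tvs TYPE('t)"
    and "dense_cont_embedding ip \<iota>"
    and "cont_antilinear g"
  shows "summable (\<lambda>n. fock_norm_g ip \<iota> g (eps_n n f)) \<and>
         summable (\<lambda>n. fock_norm ip \<iota> (eps_n n f)) \<and>
         (\<lambda>N. fock_norm ip \<iota>
            (\<lambda>ys. exp_annih g (eps_partial N f) ys - exp (pair g f) * eps_partial N f ys))
         \<longlonglongrightarrow> 0"
proof -
  from assms(1) have "Im (ip (\<iota> f) (\<iota> f)) = 0" "0 \<le> Re (ip (\<iota> f) (\<iota> f))"
    unfolding is_hilbert_def by blast+
  then show ?thesis
    by (intro conjI summable_fock_norm_g_eps_n summable_fock_norm_eps_n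
        fock_norm_exp_annih_eps_partial_minus_tendsto)
qed

end
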